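(* Let $N$ be a conditionally acyclic TCP-net over variables $V$ in which every CPT order $\succ^X_p$ has a greatest element, and let $\mathbf{x}$ be a (possibly empty) assignment to a subset $\mathbf{X}\subseteq V$. Let $o$ be the outcome produced by the forward sweep procedure: traverse the variables in a topological order of the directed graph $(V,\mathsf{cp})$, keep the value given by $\mathbf{x}$ for variables in $\mathbf{X}$, and set each other variable $X$ to the greatest element of $\succ^X_p$, where $p$ is the (already fixed) assignment to $Pa(X)$. Then $o\in Comp(\mathbf{x})$ and $o$ is the most preferred outcome in $Comp(\mathbf{x})$, i.e. $N\models o\succ o'$ for every $o'\in Comp(\mathbf{x})$ with $o'\neq o$.
   Context: Let $V$ be a finite set of variables, each $X$ with a finite nonempty domain $D(X)$; for $U\subseteq V$, $D(U)$ is the set of assignments to $U$, an outcome is an element of $D(V)$, and juxtaposition of assignments to disjoint sets denotes their combination. For an assignment $\mathbf{x}$ to $\mathbf{X}\subseteq V$, $Comp(\mathbf{x})$ is the set of outcomes extending $\mathbf{x}$. A TCP-net is a tuple $N=\langle V,\mathsf{cp},\mathsf{i},\mathsf{ci},\mathsf{cpt},\mathsf{cit}\rangle$ where: $\mathsf{cp}$ is a set of directed cp-arcs $(X,Y)$ between distinct variables, with $Pa(X)=\{X' : (X',X)\in\mathsf{cp}\}$; $\mathsf{i}$ is a set of directed i-arcs $(X,Y)$ between distinct variables; $\mathsf{ci}$ is a set of undirected ci-arcs $\{X,Y\}$ between distinct variables, each with a nonempty selector set $S(X,Y)\subseteq V\setminus\{X,Y\}$; $\mathsf{cpt}$ assigns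 to each $X$ a table $CPT(X)$ mapping each $p\in D(Pa(X))$ to a strict partial order $\succ^X_p$ on $D(X)$ (for an assignment $u$ fixing the values of $Pa(X)$, $\succ^X_u$ denotes $\succ^X_p$ for the values $p$ that $u$ gives to $Pa(X)$); $\mathsf{cit}$ assigns to each ci-arc $\gamma=\{X,Y\}$ a table $CIT(\gamma)$, a possibly partial map from $D(S(X,Y))$ to $\{X\rhd Y,\ Y\rhd X\}$. A strict partial order $\succ$ on $D(V)$ satisfies $CPT(X)$ iff for all $p\in D(Pa(X))$, all $w\in D(V\setminus(\{X\}\cup Pa(X)))$ and all $x,x'\in D(X)$ with $x\succ^X_p x'$: $xpw\succ x'pw$. It satisfies an i-arc $(X,Y)$ iff for every $w\in D(V\setminus\{X,Y\})$, all $x,x'\in D(X)$ with $x\succ^X_w x'$ and all $y,y'\in D(Y)$: $xyw\succ x'y'w$. It satisfies $CIT(\gamma)$ for a ci-arc $\gamma=\{X,Y\}$ with $Z=S(X,Y)$ iff for every $z\in D(Z)$ at which $CIT(\gamma)$ is defined and equals $X\rhd Y$, every $w\in D(V\setminus(\{X,Y\}\cup Z))$, all $x,x'$ with $x\succ^X_{zw}x'$ and all $y,y'\in D(Y)$: $xyzw\succ x'y'zw$ (symmetrically for $Y\rhd X$). $\succ$ satisfies $N$ iff it satisfies every CPT, i-arc and CIT; $N\models o\succ o'$ means $o\succ o'$ holds in every strict partial order on $D(V)$ satisfying $N$. The dependency graph $N^\star$ has vertex set $V$, the cp-arcs and i-arcs as directed edges, the ci-arcs as undirected edges, and additionally, for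 every ci-arc $\{X_i,X_j\}$ and every $X_k\in S(X_i,X_j)$, the directed edges $(X_k,X_i)$ and $(X_k,X_j)$ (if not already present). Let $S(N)$ be the union of all selector sets. For $w\in D(S(N))$, the $w$-directed graph of $N^\star$ consists of the vertices and directed edges of $N^\star$ together with, for every ci-arc $\{X_i,X_j\}$ whose CIT maps the restriction of $w$ to $S(X_i,X_j)$ to $X_i\rhd X_j$, a directed edge $(X_i,X_j)$ (if not already present). $N$ is conditionally acyclic iff every $w$-directed graph is acyclic. *)

theory Defs
  imports Main
begin

text \<open>Combination of assignments to disjoint sets is map_add (++).\<close>

record ('v, 'd) tcpnet =
  vars  :: "'v set"
  Dom   :: "'v \<Rightarrow> 'd set"
  cp    :: "('v \<times> 'v) set"
  iarcs :: "('v \<times> 'v) set"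
  ciarcs :: "'v set set"
  sel   :: "'v set \<Rightarrow> 'v set"
  cpt   :: "'v \<Rightarrow> ('v \<rightharpoonup> 'd) \<Rightarrow> ('d \<times> 'd) set"
  cit   :: "'v set \<Rightarrow> ('v \<rightharpoonup> 'd) \<Rightarrow> 'v option"
    \<comment> \<open>cit gamma z = Some X means X \<rhd> Y; None means undefined\<close>

definition asgs :: "('v, 'd) tcpnet \<Rightarrow> 'v set \<Rightarrow> ('v \<rightharpoonup> 'd) set" where
  "asgs N U = {a. dom a = U \<and> (\<forall>X\<in>U. the (a X) \<in> Dom N X)}"

definition outcomes :: "('v, 'd) tcpnet \<Rightarrow> ('v \<rightharpoonup> 'd) set" where
  "outcomes N = asgs N (vars N)"

definition Comp :: "('v, 'd) tcpnet \<Rightarrow> ('v \<rightharpoonup> 'd) \<Rightarrow> ('v \<rightharpoonup> 'd) set" where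
  "Comp N x = {oc \<in> outcomes N. x \<subseteq>\<^sub>m oc}"

definition Pa :: "('v, 'd) tcpnet \<Rightarrow> 'v \<Rightarrow> 'v set" where
  "Pa N X = {X'. (X', X) \<in> cp N}"

definition strict_po_on :: "'a set \<Rightarrow> ('a \<times> 'a) set \<Rightarrow> bool" where
  "strict_po_on A r \<longleftrightarrow> r \<subseteq> A \<times> A \<and> (\<forall>a. (a, a) \<notin> r) \<and> trans r"

definition wf_tcpnet :: "('v, 'd) tcpnet \<Rightarrow> bool" where
  "wf_tcpnet N \<longleftrightarrow>
     finite (vars N) \<and>
     (\<forall>X\<in>vars N. finite (Dom N X) \<and> Dom N X \<noteq> {}) \<and>
     (\<forall>(X, Y)\<in>cp N. X \<in> vars N \<and> Y \<in> vars N \<and> X \<noteq> Y) \<and>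
     (\<forall>(X, Y)\<in>iarcs N. X \<in> vars N \<and> Y \<in> vars N \<and> X \<noteq> Y) \<and>
     (\<forall>g\<in>ciarcs N. (\<exists>X Y. g = {X, Y} \<and> X \<noteq> Y \<and> X \<in> vars N \<and> Y \<in> vars N) \<and>
        sel N g \<noteq> {} \<and> sel N g \<subseteq> vars N - g \<and>
        (\<forall>z\<in>asgs N (sel N g). cit N g z = None \<or> (\<exists>X\<in>g. cit N g z = Some X))) \<and>
     (\<forall>X\<in>vars N. \<forall>p\<in>asgs N (Pa N X). strict_po_on (Dom N X) (cpt N X p))"

text \<open>x \<succ>^X_u x' : u fixes the values of Pa(X), and the CPT order at those values.\<close>
definition prefu :: "('v, 'd) tcpnet \<Rightarrow> 'v \<Rightarrow> ('v \<rightharpoonup> 'd) \<Rightarrow> 'd \<Rightarrow> 'd \<Rightarrow> bool" where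
  "prefu N X u x x' \<longleftrightarrow> Pa N X \<subseteq> dom u \<and> (x, x') \<in> cpt N X (u |` Pa N X)"

definition sat_cpt :: "('v, 'd) tcpnet \<Rightarrow> (('v \<rightharpoonup> 'd) \<times> ('v \<rightharpoonup> 'd)) set \<Rightarrow> 'v \<Rightarrow> bool" where
  "sat_cpt N R X \<longleftrightarrow>
     (\<forall>p\<in>asgs N (Pa N X). \<forall>w\<in>asgs N (vars N - ({X} \<union> Pa N X)). \<forall>x x'.
        (x, x') \<in> cpt N X p \<longrightarrow> ([X \<mapsto> x] ++ p ++ w, [X \<mapsto> x'] ++ p ++ w) \<in> R)"

definition sat_iarc :: "('v, 'd) tcpnet \<Rightarrow> (('v \<rightharpoonup> 'd) \<times> ('v \<rightharpoonup> 'd)) set \<Rightarrow> 'v \<Rightarrow> 'v \<Rightarrow> bool" where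
  "sat_iarc N R X Y \<longleftrightarrow>
     (\<forall>w\<in>asgs N (vars N - {X, Y}). \<forall>x x'. prefu N X w x x' \<longrightarrow>
        (\<forall>y\<in>Dom N Y. \<forall>y'\<in>Dom N Y. ([X \<mapsto> x, Y \<mapsto> y] ++ w, [X \<mapsto> x', Y \<mapsto> y'] ++ w) \<in> R))"

definition sat_cit :: "('v, 'd) tcpnet \<Rightarrow> (('v \<rightharpoonup> 'd) \<times> ('v \<rightharpoonup> 'd)) set \<Rightarrow> 'v set \<Rightarrow> bool" where
  "sat_cit N R g \<longleftrightarrow>
     (\<forall>z\<in>asgs N (sel N g). \<forall>X Y. g = {X, Y} \<longrightarrow> X \<noteq> Y \<longrightarrow> cit N g z = Some X \<longrightarrow>
        (\<forall>w\<in>asgs N (vars N - (g \<union> sel N g)). \<forall>x x'. prefu N X (z ++ w) x x' \<longrightarrow>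
          (\<forall>y\<in>Dom N Y. \<forall>y'\<in>Dom N Y.
             ([X \<mapsto> x, Y \<mapsto> y] ++ z ++ w, [X \<mapsto> x', Y \<mapsto> y'] ++ z ++ w) \<in> R)))"

definition satisfies :: "('v, 'd) tcpnet \<Rightarrow> (('v \<rightharpoonup> 'd) \<times> ('v \<rightharpoonup> 'd)) set \<Rightarrow> bool" where
  "satisfies N R \<longleftrightarrow> (\<forall>X\<in>vars N. sat_cpt N R X) \<and> (\<forall>(X, Y)\<in>iarcs N. sat_iarc N R X Y)
     \<and> (\<forall>g\<in>ciarcs N. sat_cit N R g)"

definition entails :: "('v, 'd) tcpnet \<Rightarrow> ('v \<rightharpoonup> 'd) \<Rightarrow> ('v \<rightharpoonup> 'd) \<Rightarrow> bool" where
  "entails N oc oc' \<longleftrightarrow>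
     (\<forall>R. strict_po_on (outcomes N) R \<and> satisfies N R \<longrightarrow> (oc, oc') \<in> R)"

definition SN :: "('v, 'd) tcpnet \<Rightarrow> 'v set" where
  "SN N = \<Union> (sel N ` ciarcs N)"

definition wgraph :: "('v, 'd) tcpnet \<Rightarrow> ('v \<rightharpoonup> 'd) \<Rightarrow> ('v \<times> 'v) set" where
  "wgraph N w = cp N \<union> iarcs N
     \<union> {(Xk, Xi). \<exists>g\<in>ciarcs N. Xi \<in> g \<and> Xk \<in> sel N g}
     \<union> {(Xi, Xj). \<exists>g\<in>ciarcs N. g = {Xi, Xj} \<and> Xi \<noteq> Xj \<and> cit N g (w |` sel N g) = Some Xi}"

definition cond_acyclic :: "('v, 'd) tcpnet \<Rightarrow> bool" where
  "cond_acyclic N \<longleftrightarrow> (\<forall>w\<in>asgs N (SN N). acyclic (wgraph N w))"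

definition topo_order :: "('v, 'd) tcpnet \<Rightarrow> 'v list \<Rightarrow> bool" where
  "topo_order N L \<longleftrightarrow> distinct L \<and> set L = vars N \<and>
     (\<forall>i j. i < length L \<longrightarrow> j < length L \<longrightarrow> (L ! i, L ! j) \<in> cp N \<longrightarrow> i < j)"

definition greatest_el :: "'d set \<Rightarrow> ('d \<times> 'd) set \<Rightarrow> 'd" where
  "greatest_el A r = (THE g. g \<in> A \<and> (\<forall>y\<in>A. y \<noteq> g \<longrightarrow> (g, y) \<in> r))"

fun sweep :: "('v, 'd) tcpnet \<Rightarrow> ('v \<rightharpoonup> 'd) \<Rightarrow> 'v list \<Rightarrow> ('v \<rightharpoonup> 'd) \<Rightarrow> ('v \<rightharpoonup> 'd)" where
  "sweep N x [] oc = oc"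
| "sweep N x (X # L) oc =
     sweep N x L (oc(X \<mapsto> (if X \<in> dom x then the (x X)
                          else greatest_el (Dom N X) (cpt N X (oc |` Pa N X)))))"

end

theory Submission
  imports Defs
begin

text \<open>Let \<open>o\<close> be the outcome of the sweep and \<open>o'\<close> any other completion of \<open>x\<close>. Take the first
  variable \<open>Y\<close> of the topological order on which they differ. Its parents are earlier, so \<open>o\<close> and
  \<open>o'\<close> agree on them, and \<open>Y\<close> is not fixed by \<open>x\<close>; hence \<open>o Y\<close> is the greatest value of
  \<open>Y\<close>'s CPT row at \<open>o'\<close>'s parent values, and CPT(Y) makes changing \<open>o' Y\<close> to \<open>o Y\<close> an improvement.
  The improved outcome is closer to \<open>o\<close>, so finitely many such flips reach \<open>o\<close>, and transitivity
  gives \<open>o \<succ> o'\<close>.\<close>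

lemma sweep_append: "sweep N x (L1 @ L2) oc = sweep N x L2 (sweep N x L1 oc)"
  by (induction L1 arbitrary: oc) auto

lemma sweep_notin: "Z \<notin> set L \<Longrightarrow> sweep N x L oc Z = oc Z"
  by (induction L arbitrary: oc) auto

lemma dom_sweep: "dom (sweep N x L oc) = dom oc \<union> set L"
  by (induction L arbitrary: oc) auto

lemma sweep_nth:
  assumes "distinct L" and "i < length L" and Pa_before: "Pa N (L!i) \<subseteq> set (take i L)"
  shows "sweep N x L oc (L!i) = Some (if L!i \<in> dom x then the (x (L!i))
           else greatest_el (Dom N (L!i)) (cpt N (L!i) (sweep N x L oc |` Pa N (L!i))))"
proof -
  let ?X = "L!i" and ?pre = "take i L" and ?post = "drop (Suc i) L"
  define before where "before = sweep N x ?pre oc"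
  define v where "v = (if ?X \<in> dom x then the (x ?X)
                       else greatest_el (Dom N ?X) (cpt N ?X (before |` Pa N ?X)))"
  have L: "L = ?pre @ ?X # ?post"
    using \<open>i < length L\<close> by (simp add: id_take_nth_drop)
  with \<open>distinct L\<close> have "distinct (?pre @ ?X # ?post)"
    by simp
  then have X_post: "?X \<notin> set ?post" and pre_post: "set ?pre \<inter> set ?post = {}"
    and X_pre: "?X \<notin> set ?pre"
    by auto
  have sweep_L: "sweep N x L oc = sweep N x ?post (before(?X \<mapsto> v))"
    by (subst L) (simp add: sweep_append before_def v_def)
  have "sweep N x L oc |` Pa N ?X = before |` Pa N ?X"
  proof (rule ext)
    fix Z
    show "(sweep N x L oc |` Pa N ?X) Z = (before |` Pa N ?X) Z"
    proof (cases "Z \<in> Pa N ?X")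
      case True
      with Pa_before pre_post X_pre have "Z \<notin> set ?post" "Z \<noteq> ?X"
        by auto
      with True show ?thesis
        by (simp add: sweep_L sweep_notin)
    qed simp
  qed
  moreover have "sweep N x L oc ?X = Some v"
    using X_post by (simp add: sweep_L sweep_notin)
  ultimately show ?thesis
    by (simp add: v_def)
qed

lemma greatest_el_eqI:
  assumes "strict_po_on A r" and "g \<in> A" and "\<forall>y\<in>A. y \<noteq> g \<longrightarrow> (g, y) \<in> r"
  shows "greatest_el A r = g"
  unfolding greatest_el_def
proof (rule the_equality)
  fix g' assume g': "g' \<in> A \<and> (\<forall>y\<in>A. y \<noteq> g' \<longrightarrow> (g', y) \<in> r)"
  show "g' = g"
  proof (rule ccontr)
    assume "g' \<noteq> g"
    with assms g' have "(g', g) \<in> r" and "(g, g') \<in> r" by auto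
    with \<open>strict_po_on A r\<close> show False
      unfolding strict_po_on_def trans_def by blast
  qed
qed (use assms in auto)

lemma map_upd_split_parents:
  assumes "dom m = V" and "Y \<in> V" and "Y \<notin> P" and "P \<subseteq> V"
  shows "[Y \<mapsto> c] ++ (m |` P) ++ (m |` (V - ({Y} \<union> P))) = m(Y \<mapsto> c)"
proof (rule ext)
  fix Z
  show "([Y \<mapsto> c] ++ (m |` P) ++ (m |` (V - ({Y} \<union> P)))) Z = (m(Y \<mapsto> c)) Z"
    using assms by (cases "Z \<in> V") (auto simp: map_add_def restrict_map_def split: option.split)
qed

lemma wf_tcpnet_Pa_subset: "wf_tcpnet N \<Longrightarrow> Pa N X \<subseteq> vars N"
  unfolding wf_tcpnet_def Pa_def by blast

lemma wf_tcpnet_notin_Pa: "wf_tcpnet N \<Longrightarrow> X \<notin> Pa N X"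
  unfolding wf_tcpnet_def Pa_def by blast

lemma wf_tcpnet_finite_vars: "wf_tcpnet N \<Longrightarrow> finite (vars N)"
  unfolding wf_tcpnet_def by (elim conjE)

lemma wf_tcpnet_strict_po_cpt:
  "wf_tcpnet N \<Longrightarrow> X \<in> vars N \<Longrightarrow> p \<in> asgs N (Pa N X) \<Longrightarrow> strict_po_on (Dom N X) (cpt N X p)"
  unfolding wf_tcpnet_def by blast

lemma restrict_in_asgs:
  assumes "m \<in> outcomes N" and "U \<subseteq> vars N"
  shows "m |` U \<in> asgs N U"
  using assms unfolding outcomes_def asgs_def by auto

lemma topo_order_Pa_before:
  assumes "topo_order N L" and "wf_tcpnet N" and "i < length L" and "Z \<in> Pa N (L!i)"
  obtains j where "j < i" and "Z = L!j"
proof -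
  have "Z \<in> set L"
    using assms(1,4) wf_tcpnet_Pa_subset[OF assms(2)] unfolding topo_order_def by blast
  then obtain j where j: "j < length L" "Z = L!j"
    by (auto simp: in_set_conv_nth)
  moreover have "(L!j, L!i) \<in> cp N"
    using assms(4) j(2) unfolding Pa_def by simp
  ultimately have "j < i"
    using assms(1,3) unfolding topo_order_def by blast
  with j that show thesis by blast
qed

lemma topo_order_Pa_subset_take:
  assumes "topo_order N L" and "wf_tcpnet N" and "i < length L"
  shows "Pa N (L!i) \<subseteq> set (take i L)"
proof
  fix Z assume "Z \<in> Pa N (L!i)"
  with assms obtain j where "j < i" "Z = L!j"
    by (rule topo_order_Pa_before)
  with \<open>i < length L\<close> show "Z \<in> set (take i L)"
    by (auto simp: in_set_conv_nth)
qed

definition disagreement :: "('v, 'd) tcpnet \<Rightarrow> ('v \<rightharpoonup> 'd) \<Rightarrow> ('v \<rightharpoonup> 'd) \<Rightarrow> 'v set" where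
  "disagreement N o1 o2 = {Y \<in> vars N. o1 Y \<noteq> o2 Y}"

lemma sat_cpt_worsening_flip:
  assumes "wf_tcpnet N" and "sat_cpt N R Y" and "Y \<in> vars N" and "o' \<in> outcomes N"
    and o'Y: "o' Y = Some b" and better: "(a, b) \<in> cpt N Y (o' |` Pa N Y)"
  shows "(o'(Y \<mapsto> a), o') \<in> R"
proof -
  let ?w = "o' |` (vars N - ({Y} \<union> Pa N Y))"
  have dom_o': "dom o' = vars N"
    using \<open>o' \<in> outcomes N\<close> unfolding outcomes_def asgs_def by simp
  have split: "[Y \<mapsto> c] ++ (o' |` Pa N Y) ++ ?w = o'(Y \<mapsto> c)" for c
    using map_upd_split_parents[OF dom_o' \<open>Y \<in> vars N\<close>] assms(1)
    by (simp add: wf_tcpnet_notin_Pa wf_tcpnet_Pa_subset)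
  have "o' |` Pa N Y \<in> asgs N (Pa N Y)" and "?w \<in> asgs N (vars N - ({Y} \<union> Pa N Y))"
    using restrict_in_asgs[OF \<open>o' \<in> outcomes N\<close>] wf_tcpnet_Pa_subset[OF assms(1)] by auto
  with \<open>sat_cpt N R Y\<close> better
  have "([Y \<mapsto> a] ++ (o' |` Pa N Y) ++ ?w, [Y \<mapsto> b] ++ (o' |` Pa N Y) ++ ?w) \<in> R"
    unfolding sat_cpt_def by blast
  then show ?thesis
    unfolding split using o'Y by (simp add: map_upd_triv)
qed

lemma trans_descent:
  fixes \<mu> :: "'a \<Rightarrow> nat"
  assumes "trans R"
    and descent: "\<And>b. b \<in> C \<Longrightarrow> b \<noteq> a \<Longrightarrow> \<exists>c\<in>C. (c, b) \<in> R \<and> \<mu> c < \<mu> b"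
  shows "b \<in> C \<Longrightarrow> b \<noteq> a \<Longrightarrow> (a, b) \<in> R"
proof (induction b rule: measure_induct_rule[of \<mu>])
  case (less b)
  then obtain c where c: "c \<in> C" "(c, b) \<in> R" "\<mu> c < \<mu> b"
    using descent by meson
  show ?case
  proof (cases "c = a")
    case False
    then have "(a, c) \<in> R"
      using less.IH c by blast
    with c(2) show ?thesis
      using transD[OF \<open>trans R\<close>] by blast
  qed (use c in simp)
qed

locale forward_sweep =
  fixes N :: "('v, 'd) tcpnet" and Xs :: "'v set" and x :: "'v \<rightharpoonup> 'd" and L :: "'v list"
  assumes wf: "wf_tcpnet N"
    and greatest_exists: "\<forall>X\<in>vars N. \<forall>p\<in>asgs N (Pa N X).
           \<exists>g\<in>Dom N X. \<forall>y\<in>Dom N X. y \<noteq> g \<longrightarrow> (g, y) \<in> cpt N X p"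
    and Xs_vars: "Xs \<subseteq> vars N"
    and x_asg: "x \<in> asgs N Xs"
    and topo: "topo_order N L"
begin

abbreviation best :: "'v \<rightharpoonup> 'd" where
  "best \<equiv> sweep N x L Map.empty"

lemma dom_x: "dom x = Xs"
  using x_asg unfolding asgs_def by simp

lemma set_L: "set L = vars N"
  using topo unfolding topo_order_def by simp

lemma dom_best: "dom best = vars N"
  by (simp add: dom_sweep set_L)

lemma greatest_el_cpt:
  assumes "X \<in> vars N" and "p \<in> asgs N (Pa N X)"
  shows "greatest_el (Dom N X) (cpt N X p) \<in> Dom N X"
    and "y \<in> Dom N X \<Longrightarrow> y \<noteq> greatest_el (Dom N X) (cpt N X p)
           \<Longrightarrow> (greatest_el (Dom N X) (cpt N X p), y) \<in> cpt N X p"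
proof -
  obtain g where g: "g \<in> Dom N X" "\<forall>y\<in>Dom N X. y \<noteq> g \<longrightarrow> (g, y) \<in> cpt N X p"
    using greatest_exists assms by blast
  have "strict_po_on (Dom N X) (cpt N X p)"
    using wf assms by (rule wf_tcpnet_strict_po_cpt)
  then have "greatest_el (Dom N X) (cpt N X p) = g"
    using g by (rule greatest_el_eqI)
  with g show "greatest_el (Dom N X) (cpt N X p) \<in> Dom N X"
    and "y \<in> Dom N X \<Longrightarrow> y \<noteq> greatest_el (Dom N X) (cpt N X p)
           \<Longrightarrow> (greatest_el (Dom N X) (cpt N X p), y) \<in> cpt N X p"
    by auto
qed

lemma best_nth:
  "i < length L \<Longrightarrow> best (L!i) = Some (if L!i \<in> Xs then the (x (L!i))
     else greatest_el (Dom N (L!i)) (cpt N (L!i) (best |` Pa N (L!i))))"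
  using sweep_nth[OF _ _ topo_order_Pa_subset_take[OF topo wf]] topo dom_x
  unfolding topo_order_def by blast

lemma best_nth_in_Dom: "i < length L \<Longrightarrow> the (best (L!i)) \<in> Dom N (L!i)"
proof (induction i rule: less_induct)
  case (less i)
  let ?X = "L!i"
  have X_vars: "?X \<in> vars N"
    using less.prems set_L nth_mem by blast
  have "best |` Pa N ?X \<in> asgs N (Pa N ?X)"
    unfolding asgs_def
  proof (intro CollectI conjI ballI)
    show "dom (best |` Pa N ?X) = Pa N ?X"
      using dom_best wf_tcpnet_Pa_subset[OF wf] by auto
  next
    fix Z assume "Z \<in> Pa N ?X"
    moreover obtain j where "j < i" "Z = L!j"
      using topo wf less.prems \<open>Z \<in> Pa N ?X\<close> by (rule topo_order_Pa_before)
    ultimately show "the ((best |` Pa N ?X) Z) \<in> Dom N Z"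
      using less.IH less.prems by auto
  qed
  with X_vars show ?case
    using best_nth[OF less.prems] x_asg greatest_el_cpt(1)
    unfolding asgs_def by auto
qed

lemma best_in_Dom: "X \<in> vars N \<Longrightarrow> the (best X) \<in> Dom N X"
  by (metis best_nth_in_Dom set_L in_set_conv_nth)

lemma best_in_Comp: "best \<in> Comp N x"
proof -
  have "x \<subseteq>\<^sub>m best"
    unfolding map_le_def
  proof
    fix X assume "X \<in> dom x"
    then obtain i where i: "i < length L" "X = L!i"
      using dom_x Xs_vars set_L by (metis in_set_conv_nth subsetD)
    with \<open>X \<in> dom x\<close> show "x X = best X"
      using best_nth[OF i(1)] dom_x by auto
  qed
  then show ?thesis
    unfolding Comp_def outcomes_def asgs_def using dom_best best_in_Dom by auto
qed

lemma best_greatest: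
  assumes "X \<in> vars N" and "X \<notin> Xs" and "y \<in> Dom N X" and "y \<noteq> the (best X)"
  shows "(the (best X), y) \<in> cpt N X (best |` Pa N X)"
proof -
  obtain i where i: "i < length L" "X = L!i"
    using assms(1) set_L by (metis in_set_conv_nth)
  have "best |` Pa N X \<in> asgs N (Pa N X)"
    using best_in_Comp wf_tcpnet_Pa_subset[OF wf]
    unfolding Comp_def by (blast intro: restrict_in_asgs)
  moreover have "the (best X) = greatest_el (Dom N X) (cpt N X (best |` Pa N X))"
    using best_nth[OF i(1)] i assms(2) by simp
  ultimately show ?thesis
    using greatest_el_cpt(2)[OF assms(1)] assms(3,4) by simp
qed

lemma first_difference:
  assumes o'_Comp: "o' \<in> Comp N x" and "o' \<noteq> best"
  obtains Y where "Y \<in> vars N" and "Y \<notin> Xs" and "o' Y \<noteq> best Y"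
    and "o' |` Pa N Y = best |` Pa N Y"
proof -
  let ?D = "disagreement N o' best"
  have dom_o': "dom o' = vars N" and x_o': "x \<subseteq>\<^sub>m o'"
    using o'_Comp unfolding Comp_def outcomes_def asgs_def by auto
  have "?D \<noteq> {}"
  proof
    assume "?D = {}"
    then have "o' Y = best Y" for Y
    proof (cases "Y \<in> vars N")
      case False
      then have "Y \<notin> dom o'" and "Y \<notin> dom best"
        using dom_o' dom_best by auto
      then show ?thesis
        by (simp add: domIff)
    qed (auto simp: disagreement_def)
    with \<open>o' \<noteq> best\<close> show False by blast
  qed
  then obtain i0 where i0: "i0 < length L \<and> L!i0 \<in> ?D"
    using set_L unfolding disagreement_def
    by (metis (lifting) Collect_mem_eq ex_in_conv in_set_conv_nth mem_Collect_eq)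
  define i where "i = (LEAST i. i < length L \<and> L!i \<in> ?D)"
  have i: "i < length L" "L!i \<in> ?D"
    using LeastI[of "\<lambda>i. i < length L \<and> L!i \<in> ?D", OF i0] unfolding i_def by auto
  have first: "L!j \<notin> ?D" if "j < i" for j
    using not_less_Least[of j "\<lambda>i. i < length L \<and> L!i \<in> ?D"] that i(1) unfolding i_def by auto
  have Y_diff: "o' (L!i) \<noteq> best (L!i)"
    using i(2) unfolding disagreement_def by simp
  moreover have "L!i \<notin> Xs"
  proof
    assume "L!i \<in> Xs"
    then have "o' (L!i) = x (L!i)" and "best (L!i) = x (L!i)"
      using x_o' best_in_Comp dom_x unfolding Comp_def map_le_def by auto
    with Y_diff show False by simp
  qed
  moreover have "o' |` Pa N (L!i) = best |` Pa N (L!i)"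
  proof (rule ext)
    fix Z
    show "(o' |` Pa N (L!i)) Z = (best |` Pa N (L!i)) Z"
    proof (cases "Z \<in> Pa N (L!i)")
      case True
      with topo wf i(1) obtain j where "j < i" "Z = L!j"
        by (rule topo_order_Pa_before)
      with True first wf_tcpnet_Pa_subset[OF wf] show ?thesis
        unfolding disagreement_def by auto
    qed simp
  qed
  moreover have "L!i \<in> vars N"
    using i(2) unfolding disagreement_def by simp
  ultimately show thesis
    using that by blast
qed

lemma improving_flip_towards_best:
  assumes "satisfies N R" and o'_Comp: "o' \<in> Comp N x" and "o' \<noteq> best"
  shows "\<exists>o''\<in>Comp N x. (o'', o') \<in> R
           \<and> card (disagreement N o'' best) < card (disagreement N o' best)"
proof -
  obtain Y where Y_vars: "Y \<in> vars N" and Y_free: "Y \<notin> Xs" and Y_diff: "o' Y \<noteq> best Y"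
    and parents_agree: "o' |` Pa N Y = best |` Pa N Y"
    using o'_Comp \<open>o' \<noteq> best\<close> by (rule first_difference)
  have o'_out: "o' \<in> outcomes N"
    using o'_Comp unfolding Comp_def by simp
  then obtain a b where a: "best Y = Some a" and b: "o' Y = Some b" and "b \<in> Dom N Y"
    using Y_vars dom_best unfolding outcomes_def asgs_def by fastforce
  then have "(a, b) \<in> cpt N Y (o' |` Pa N Y)"
    using best_greatest[OF Y_vars Y_free] Y_diff parents_agree by auto
  then have "(o'(Y \<mapsto> a), o') \<in> R"
    using sat_cpt_worsening_flip[OF wf _ Y_vars o'_out b] assms(1) Y_vars
    unfolding satisfies_def by blast
  moreover have "o'(Y \<mapsto> a) \<in> Comp N x"
    using o'_Comp Y_vars best_in_Dom[OF Y_vars] a Y_free dom_x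
    unfolding Comp_def outcomes_def asgs_def by (auto simp: map_le_def)
  moreover have "disagreement N (o'(Y \<mapsto> a)) best = disagreement N o' best - {Y}"
    using a unfolding disagreement_def by auto
  moreover have "card (disagreement N o' best - {Y}) < card (disagreement N o' best)"
    using Y_vars Y_diff wf_tcpnet_finite_vars[OF wf]
    unfolding disagreement_def by (intro card_Diff1_less) auto
  ultimately show ?thesis
    by (metis (no_types, lifting))
qed

lemma best_entails: "o' \<in> Comp N x \<Longrightarrow> o' \<noteq> best \<Longrightarrow> entails N best o'"
  unfolding entails_def
proof (intro allI impI)
  fix R assume R: "strict_po_on (outcomes N) R \<and> satisfies N R"
  then have "trans R"
    unfolding strict_po_on_def by blast
  then show "o' \<in> Comp N x \<Longrightarrow> o' \<noteq> best \<Longrightarrow> (best, o') \<in> R"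
    by (rule trans_descent[where C = "Comp N x" and \<mu> = "\<lambda>o'. card (disagreement N o' best)"])
      (use R improving_flip_towards_best in blast)
qed

end

theorem corollary1:
  fixes N :: "('v, 'd) tcpnet" and Xs :: "'v set" and x :: "'v \<rightharpoonup> 'd" and L :: "'v list"
  assumes "wf_tcpnet N"
    and "cond_acyclic N"
    and "\<forall>X\<in>vars N. \<forall>p\<in>asgs N (Pa N X).
           \<exists>g\<in>Dom N X. \<forall>y\<in>Dom N X. y \<noteq> g \<longrightarrow> (g, y) \<in> cpt N X p"
    and "Xs \<subseteq> vars N"
    and "x \<in> asgs N Xs"
    and "topo_order N L"
  shows "sweep N x L Map.empty \<in> Comp N x \<and>
         (\<forall>o'\<in>Comp N x. o' \<noteq> sweep N x L Map.empty \<longrightarrow> entails N (sweep N x L Map.empty) o')"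
proof -
  interpret forward_sweep N Xs x L
    using assms(1,3-6) by unfold_locales
  show ?thesis
    using best_in_Comp best_entails by blast
qed

end
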